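(* Consider the vehicle platoon model described in the context, with communication attempt times $\mathcal S=\{s_0,s_1,\ldots\}$, $s_j=jT$, and the time-discretized braking model, and let $0\le t_0<t_1<t_2<\cdots$ be simulation time instants with $\mathcal T\triangleq\{t_0,t_1,t_2,\ldots\}$. If $\mathcal S\subseteq\mathcal T$ and there exists $\alpha>0$ such that for every $k\in\mathbb{N}_0$ $$t_{k+1}-t_k\le \frac{1}{\|A_{\mathrm c}\|}\ln\!\left(\frac{\alpha}{\sqrt2\left(\|x(t_k)\|+\frac{\|B_{\mathrm c}u(t_k)\|}{\|A_{\mathrm c}\|}\right)}+1\right),$$ then $$|d_i(t)-d_i(t_k)|\le\alpha\quad\text{for all }t\in[t_k,t_{k+1}),$$ for every $k\in\mathbb{N}_0$ and every $i\in\{2,3,\ldots,n\}$, where $d_i(t)=p_{i-1}(t)-p_i(t)-L_i$.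
   Context: $\|\cdot\|$ denotes the Euclidean norm and the induced matrix norm. Fix $n\in\mathbb{N}$, $n\ge 2$, constants $\tau_{\mathrm d}>0$, $h>0$, $k_{\mathrm p},k_{\mathrm d}\in\mathbb{R}$, vehicle lengths $L_i>0$, standstill distance $r>0$, communication period $T>0$. Communication attempts happen at $s_j=jT$, $j\in\mathbb{N}_0$; for $i\in\{1,\ldots,n-1\}$, $j\in\mathbb{N}$, $l^i_j\in\{0,1\}$ are arbitrary failure indicators ($1$ = failure, $0$ = success). State: $x(t)=[x_0^\top,x_1^\top,\ldots,x_n^\top]^\top\in\mathbb{R}^{3+6n}$, $x_0=[p_0,v_0,a_0]^\top$ (virtual reference vehicle), $x_i=[e_i,\dot e_i,p_i,v_i,a_i,u_i]^\top$ for $i=1,\ldots,n$ (position, velocity, acceleration, desired acceleration; spacing error $e_i=(p_{i-1}-p_i-L_i)-(r+hv_i)$ and its derivative as state components). Input: $u(t)=[u_0(t),\hat u_0(t),\ldots,\hat u_{n-1}(t)]^\top\in\mathbb{R}^{1+n}$, $\hat u_0=u_0$, and for $i\in\{1,\ldots,n-1\}$: $\hat u_i(s_0)=u_i(s_0)$; for $j\in\mathbb{N}$, $\hat u_i(s_j)=\hat u_i(s_{j-1})$ if $l^i_j=1$, $\hat u_i(s_j)=u_i(s_j)$ if $l^i_j=0$; $\hat u_i(t)=\hat u_i(s_j)$ for $t\in(s_j,s_{j+1})$. Dynamics: $\dot x=A_{\mathrm c}x+B_{\mathrm c}u$, $A_{\mathrm c}$ block lower-bidiagonal with diagonal blocks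 $M,N,\ldots,N$, block below $M$ equal to $G$, remaining subdiagonal blocks $H$; $B_{\mathrm c}=\mathrm{blockdiag}(E,F,\ldots,F)$; here $M=\begin{bmatrix}0&1&0\\0&0&1\\0&0&-1/\tau_{\mathrm d}\end{bmatrix}$, $N=\begin{bmatrix}0&0&0&-1&-h&0\\0&0&0&0&h/\tau_{\mathrm d}-1&-h/\tau_{\mathrm d}\\0&0&0&1&0&0\\0&0&0&0&1&0\\0&0&0&0&-1/\tau_{\mathrm d}&1/\tau_{\mathrm d}\\k_{\mathrm p}/h&k_{\mathrm d}/h&0&0&0&-1/h\end{bmatrix}$, $G\in\mathbb{R}^{6\times3}$ with $G_{12}=G_{23}=1$, other entries $0$; $H\in\mathbb{R}^{6\times6}$ with $H_{14}=H_{25}=1$, other entries $0$; $E=[0,0,1/\tau_{\mathrm d}]^\top$, $F=[0,0,0,0,0,1/h]^\top$. Time-discretized braking model: $t_{\mathrm{brake}}>0$, $\gamma>0$, $0<\eta\le1/(4\tau_{\mathrm d})$. Let $(\bar p_0,\bar v_0,\bar a_0)$ solve $\dot{\bar p}_0=\bar v_0$, $\dot{\bar v}_0=\bar a_0$, $\dot{\bar a}_0=(-\bar a_0+\bar u_0)/\tau_{\mathrm d}$ with $\bar u_0(t)=0$ for $t<t_{\mathrm{brake}}$ and $\bar u_0(t)=\max\{-\gamma,-\eta\bar v_0(t)\}$ for $t\ge t_{\mathrm{brake}}$; $t^*=\min\{t\ge t_{\mathrm{brake}}:-\eta\bar v_0(t)\ge-\gamma\}$; $\lambda_{1,2}=\frac{-1\pm\sqrt{1-4\eta\tau_{\mathrm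 d}}}{2\tau_{\mathrm d}}$, $\lambda_3=-\frac1{2\tau_{\mathrm d}}$, $\beta_2=\frac{\bar a_0(t^* )-\lambda_2\gamma/\eta}{\lambda_1-\lambda_2}$, $\beta_3=\frac{\lambda_1\gamma/\eta-\bar a_0(t^* )}{\lambda_1-\lambda_2}$, $\beta_4=\gamma/\eta$, $\beta_5=\bar a_0(t^* )+2\gamma$. Then $u_0(t)=u_{0,k}$ on $[s_k,s_{k+1})$ with $u_{0,k}=0$ if $kT<t_{\mathrm{brake}}$; $-\gamma$ if $t_{\mathrm{brake}}\le kT<t^*$; $-\eta(\beta_2e^{\lambda_1(kT-t^* )}+\beta_3e^{\lambda_2(kT-t^* )})$ if $kT\ge t^*$, $\eta<\frac1{4\tau_{\mathrm d}}$; $-\eta e^{\lambda_3(kT-t^* )}(\beta_4+\beta_5(kT-t^* ))$ if $kT\ge t^*$, $\eta=\frac1{4\tau_{\mathrm d}}$. *)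

theory Defs
  imports Complex_Main
begin

text \<open>A vector of dimension d is represented by a function nat => real (only the
entries with index < d matter); a d1 x d2 matrix by nat => nat => real.
Indices are 0-based.\<close>

definition vnorm :: "nat \<Rightarrow> (nat \<Rightarrow> real) \<Rightarrow> real" where
  "vnorm d v = sqrt (\<Sum>i<d. (v i)^2)"

definition mvmul :: "nat \<Rightarrow> (nat \<Rightarrow> nat \<Rightarrow> real) \<Rightarrow> (nat \<Rightarrow> real) \<Rightarrow> nat \<Rightarrow> real" where
  "mvmul d A v = (\<lambda>r. \<Sum>c<d. A r c * v c)"

definition opnorm :: "nat \<Rightarrow> nat \<Rightarrow> (nat \<Rightarrow> nat \<Rightarrow> real) \<Rightarrow> real" where
  "opnorm m d A = Sup {vnorm m (mvmul d A v) | v. vnorm d v = 1}"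

definition Mmat :: "real \<Rightarrow> nat \<Rightarrow> nat \<Rightarrow> real" where
  "Mmat tau = (\<lambda>i j. [[0,1,0],[0,0,1],[0,0,-1/tau]] ! i ! j)"

definition Nmat :: "real \<Rightarrow> real \<Rightarrow> real \<Rightarrow> real \<Rightarrow> nat \<Rightarrow> nat \<Rightarrow> real" where
  "Nmat tau h kp kd = (\<lambda>i j.
     [[0,0,0,-1,-h,0],
      [0,0,0,0,h/tau - 1,-h/tau],
      [0,0,0,1,0,0],
      [0,0,0,0,1,0],
      [0,0,0,0,-1/tau,1/tau],
      [kp/h,kd/h,0,0,0,-1/h]] ! i ! j)"

definition Gmat :: "nat \<Rightarrow> nat \<Rightarrow> real" where
  "Gmat i j = (if (i = 0 \<and> j = 1) \<or> (i = 1 \<and> j = 2) then 1 else 0)"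

definition Hmat :: "nat \<Rightarrow> nat \<Rightarrow> real" where
  "Hmat i j = (if (i = 0 \<and> j = 3) \<or> (i = 1 \<and> j = 4) then 1 else 0)"

definition Evec :: "real \<Rightarrow> nat \<Rightarrow> real" where
  "Evec tau = (\<lambda>i. [0,0,1/tau] ! i)"

definition Fvec :: "real \<Rightarrow> nat \<Rightarrow> real" where
  "Fvec h = (\<lambda>i. [0,0,0,0,0,1/h] ! i)"

text \<open>Row/column index r of the state belongs to block blk r (block 0 = x_0, of
size 3; block i >= 1 = x_i, of size 6) at offset off r inside that block.\<close>
definition blk :: "nat \<Rightarrow> nat" where
  "blk r = (if r < 3 then 0 else (r - 3) div 6 + 1)"

definition off :: "nat \<Rightarrow> nat" where
  "off r = (if r < 3 then r else (r - 3) mod 6)"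

definition Ac :: "nat \<Rightarrow> real \<Rightarrow> real \<Rightarrow> real \<Rightarrow> real \<Rightarrow> nat \<Rightarrow> nat \<Rightarrow> real" where
  "Ac n tau h kp kd r c =
     (if r < 3 + 6*n \<and> c < 3 + 6*n then
        (if blk r = blk c then
           (if blk r = 0 then Mmat tau (off r) (off c) else Nmat tau h kp kd (off r) (off c))
         else if blk r = Suc (blk c) then
           (if blk c = 0 then Gmat (off r) (off c) else Hmat (off r) (off c))
         else 0)
      else 0)"

definition Bc :: "nat \<Rightarrow> real \<Rightarrow> real \<Rightarrow> nat \<Rightarrow> nat \<Rightarrow> real" where
  "Bc n tau h r c =
     (if r < 3 + 6*n \<and> c < 1 + n \<and> blk r = c then
        (if c = 0 then Evec tau (off r) else Fvec h (off r))
      else 0)"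

text \<open>State indices (0-based) of the components of vehicle i >= 1:
 e_i, de_i, p_i, v_i, a_i, u_i; and of the reference vehicle: p_0, v_0, a_0.\<close>
definition eidx :: "nat \<Rightarrow> nat" where "eidx i = 6*i - 3"
definition edidx :: "nat \<Rightarrow> nat" where "edidx i = 6*i - 2"
definition pidx :: "nat \<Rightarrow> nat" where "pidx i = (if i = 0 then 0 else 6*i - 1)"
definition vidx :: "nat \<Rightarrow> nat" where "vidx i = (if i = 0 then 1 else 6*i)"
definition aidx :: "nat \<Rightarrow> nat" where "aidx i = (if i = 0 then 2 else 6*i + 1)"
definition uidx :: "nat \<Rightarrow> nat" where "uidx i = 6*i + 2"

definition brake_input :: "real \<Rightarrow> real \<Rightarrow> real \<Rightarrow> (real \<Rightarrow> real) \<Rightarrow> real \<Rightarrow> real" where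
  "brake_input gamma eta tb vb t = (if t < tb then 0 else max (- gamma) (- eta * vb t))"

text \<open>(pb, vb, ab) solves the continuous braking model (the acceleration is
continuous; its derivative may jump at t_brake).\<close>
definition brake_traj :: "real \<Rightarrow> real \<Rightarrow> real \<Rightarrow> real \<Rightarrow> (real \<Rightarrow> real) \<Rightarrow> (real \<Rightarrow> real) \<Rightarrow> (real \<Rightarrow> real) \<Rightarrow> bool" where
  "brake_traj tau gamma eta tb pb vb ab \<longleftrightarrow>
     (\<forall>t. (pb has_real_derivative vb t) (at t)) \<and>
     (\<forall>t. (vb has_real_derivative ab t) (at t)) \<and>
     continuous_on UNIV ab \<and>
     (\<forall>t. t \<noteq> tb \<longrightarrow> (ab has_real_derivative ((- ab t + brake_input gamma eta tb vb t) / tau)) (at t))"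

definition tstar :: "real \<Rightarrow> real \<Rightarrow> real \<Rightarrow> (real \<Rightarrow> real) \<Rightarrow> real" where
  "tstar gamma eta tb vb = Inf {t. tb \<le> t \<and> - eta * vb t \<ge> - gamma}"

text \<open>"kT >= t*" is expressed as: the set defining t* has an element in [t_brake, kT]
(equivalent whenever the minimum t* exists; if it never exists, u_0 stays -gamma).\<close>
definition u0seq :: "real \<Rightarrow> real \<Rightarrow> real \<Rightarrow> real \<Rightarrow> real \<Rightarrow> (real \<Rightarrow> real) \<Rightarrow> (real \<Rightarrow> real) \<Rightarrow> nat \<Rightarrow> real" where
  "u0seq tau T gamma eta tb vb ab k =
    (let s = real k * T;
         ts = tstar gamma eta tb vb;
         l1 = (-1 + sqrt (1 - 4*eta*tau)) / (2*tau);
         l2 = (-1 - sqrt (1 - 4*eta*tau)) / (2*tau);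
         l3 = - 1 / (2*tau);
         b2 = (ab ts - l2 * gamma / eta) / (l1 - l2);
         b3 = (l1 * gamma / eta - ab ts) / (l1 - l2);
         b4 = gamma / eta;
         b5 = ab ts + 2 * gamma
     in if s < tb then 0
        else if \<not> (\<exists>t. tb \<le> t \<and> t \<le> s \<and> - eta * vb t \<ge> - gamma) then - gamma
        else if eta < 1 / (4*tau) then - eta * (b2 * exp (l1 * (s - ts)) + b3 * exp (l2 * (s - ts)))
        else - eta * exp (l3 * (s - ts)) * (b4 + b5 * (s - ts)))"

text \<open>hold l w j = \<hat>u_i(s_j) where w j = u_i(s_j) and l j = l^i_j (True = failure).\<close>
fun hold :: "(nat \<Rightarrow> bool) \<Rightarrow> (nat \<Rightarrow> real) \<Rightarrow> nat \<Rightarrow> real" where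
  "hold l w 0 = w 0"
| "hold l w (Suc j) = (if l (Suc j) then hold l w j else w (Suc j))"

text \<open>Input vector u(t) = [u_0, \<hat>u_0, \<hat>u_1, ..., \<hat>u_{n-1}] (indices 0..n), for t >= 0.\<close>
definition platoon_input ::
  "real \<Rightarrow> real \<Rightarrow> real \<Rightarrow> real \<Rightarrow> real \<Rightarrow> (real \<Rightarrow> real) \<Rightarrow> (real \<Rightarrow> real)
   \<Rightarrow> (nat \<Rightarrow> nat \<Rightarrow> bool) \<Rightarrow> (real \<Rightarrow> nat \<Rightarrow> real) \<Rightarrow> real \<Rightarrow> nat \<Rightarrow> real" where
  "platoon_input tau T gamma eta tb vb ab fail x t c =
     (let j = nat \<lfloor>t / T\<rfloor> in
      if c = 0 \<or> c = 1 then u0seq tau T gamma eta tb vb ab j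
      else hold (fail (c - 1)) (\<lambda>m. x (real m * T) (uidx (c - 1))) j)"

end

theory Submission
  imports Defs "HOL-Analysis.L2_Norm"
begin

text \<open>No communication attempt falls strictly between two consecutive simulation instants
\<open>t\<^sub>k < t\<^sub>k\<^sub>+\<^sub>1\<close>, so the zero-order-held input \<open>u\<close> is constant there and the state solves the
affine equation \<open>x' = A\<^sub>c x + b\<close>. A Gronwall argument for the smoothed norm
\<open>sqrt (\<parallel>x(s) - x(t\<^sub>k)\<parallel>\<^sup>2 + \<delta>\<^sup>2)\<close> gives
\<open>\<parallel>x(t) - x(t\<^sub>k)\<parallel> \<le> (\<parallel>x(t\<^sub>k)\<parallel> + \<parallel>b\<parallel> / \<parallel>A\<^sub>c\<parallel>) (exp (\<parallel>A\<^sub>c\<parallel> (t - t\<^sub>k)) - 1)\<close>,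
which the step-size condition bounds by \<open>\<alpha> / sqrt 2\<close>. The change of the spacing \<open>d\<^sub>i\<close> is a
difference of two state coordinates and hence at most \<open>sqrt 2\<close> times that norm.\<close>

lemma vnorm_eq_L2_set: "vnorm d v = L2_set v {..<d}"
  by (simp add: vnorm_def L2_set_def)

lemma vnorm_nonneg: "0 \<le> vnorm d v"
  by (simp add: vnorm_eq_L2_set)

lemma vnorm_triangle: "vnorm d (\<lambda>i. f i + g i) \<le> vnorm d f + vnorm d g"
  unfolding vnorm_eq_L2_set by (rule L2_set_triangle_ineq)

lemma vnorm_mult_left: "0 \<le> s \<Longrightarrow> vnorm d (\<lambda>i. s * v i) = s * vnorm d v"
  unfolding vnorm_eq_L2_set by (simp add: L2_set_right_distrib)

lemma vnorm_eq_0_imp: "vnorm d v = 0 \<Longrightarrow> i < d \<Longrightarrow> v i = 0"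
  unfolding vnorm_eq_L2_set by (simp add: L2_set_eq_0_iff)

lemma abs_sum_mult_le_vnorm: "\<bar>\<Sum>i<d. f i * g i\<bar> \<le> vnorm d f * vnorm d g"
proof -
  have "\<bar>\<Sum>i<d. f i * g i\<bar> \<le> (\<Sum>i<d. \<bar>f i * g i\<bar>)"
    by (rule sum_abs)
  also have "\<dots> = (\<Sum>i<d. \<bar>f i\<bar> * \<bar>g i\<bar>)"
    by (simp add: abs_mult)
  also have "\<dots> \<le> vnorm d f * vnorm d g"
    unfolding vnorm_eq_L2_set by (rule L2_set_mult_ineq)
  finally show ?thesis .
qed

lemma abs_diff_le_sqrt2_vnorm:
  assumes "p < d" "q < d" "p \<noteq> q"
  shows "\<bar>v p - v q\<bar> \<le> sqrt 2 * vnorm d v"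
proof -
  have "(v p - v q)^2 \<le> 2 * ((v p)^2 + (v q)^2)"
    using zero_le_power2[of "v p + v q"] by (simp add: power2_eq_square algebra_simps)
  also have "\<dots> = 2 * (\<Sum>j\<in>{p,q}. (v j)^2)"
    using assms(3) by simp
  also have "\<dots> \<le> 2 * (\<Sum>j<d. (v j)^2)"
    using assms by (intro mult_left_mono sum_mono2) auto
  finally have "sqrt ((v p - v q)^2) \<le> sqrt (2 * (\<Sum>j<d. (v j)^2))"
    by (rule real_sqrt_le_mono)
  then show ?thesis
    by (simp add: vnorm_def real_sqrt_mult)
qed

lemma mvmul_mult_right: "mvmul d A (\<lambda>i. s * v i) = (\<lambda>r. s * mvmul d A v r)"
  unfolding mvmul_def by (auto simp: sum_distrib_left intro!: sum.cong)

lemma vnorm_mvmul_le_frobenius: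
  "vnorm m (mvmul d A v) \<le> sqrt (\<Sum>r<m. (vnorm d (A r))^2) * vnorm d v"
proof -
  have "(mvmul d A v r)^2 \<le> (vnorm d (A r))^2 * (vnorm d v)^2" for r
  proof -
    have "\<bar>mvmul d A v r\<bar> \<le> vnorm d (A r) * vnorm d v"
      unfolding mvmul_def by (rule abs_sum_mult_le_vnorm)
    then have "\<bar>mvmul d A v r\<bar>^2 \<le> (vnorm d (A r) * vnorm d v)^2"
      by (rule power_mono) simp
    then show ?thesis
      by (simp add: power_mult_distrib)
  qed
  then have "(\<Sum>r<m. (mvmul d A v r)^2) \<le> (\<Sum>r<m. (vnorm d (A r))^2) * (vnorm d v)^2"
    by (simp add: sum_distrib_right sum_mono)
  then have "sqrt (\<Sum>r<m. (mvmul d A v r)^2) \<le> sqrt ((\<Sum>r<m. (vnorm d (A r))^2) * (vnorm d v)^2)"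
    by (rule real_sqrt_le_mono)
  then show ?thesis
    using vnorm_nonneg[of d v] by (simp add: vnorm_def[of m "mvmul d A v"] real_sqrt_mult)
qed

lemma bdd_above_opnorm_set: "bdd_above {vnorm m (mvmul d A v) | v. vnorm d v = 1}"
proof (rule bdd_aboveI)
  fix y assume "y \<in> {vnorm m (mvmul d A v) | v. vnorm d v = 1}"
  then obtain v where "vnorm d v = 1" "y = vnorm m (mvmul d A v)"
    by blast
  then show "y \<le> sqrt (\<Sum>r<m. (vnorm d (A r))^2)"
    using vnorm_mvmul_le_frobenius[of m d A v] by simp
qed

lemma vnorm_mvmul_le_opnorm_of_unit:
  "vnorm d v = 1 \<Longrightarrow> vnorm m (mvmul d A v) \<le> opnorm m d A"
  unfolding opnorm_def by (rule cSup_upper[OF _ bdd_above_opnorm_set]) blast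

lemma opnorm_nonneg:
  assumes "d > 0"
  shows "0 \<le> opnorm m d A"
proof -
  define e :: "nat \<Rightarrow> real" where "e i = (if i = 0 then 1 else 0)" for i
  have "(\<Sum>i<d. (e i)^2) = (\<Sum>i<d. if i = 0 then 1 else 0)"
    by (rule sum.cong) (auto simp: e_def)
  then have "vnorm d e = 1"
    using assms by (simp add: vnorm_def)
  then show ?thesis
    using vnorm_mvmul_le_opnorm_of_unit vnorm_nonneg order_trans by blast
qed

lemma vnorm_mvmul_le_opnorm:
  assumes "d > 0"
  shows "vnorm m (mvmul d A v) \<le> opnorm m d A * vnorm d v"
proof (cases "vnorm d v = 0")
  case True
  then have "mvmul d A v = (\<lambda>r. 0)"
    unfolding mvmul_def using vnorm_eq_0_imp[OF True] by auto
  then show ?thesis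
    using True by (simp add: vnorm_def)
next
  case False
  then have pos: "vnorm d v > 0"
    using vnorm_nonneg by (metis less_eq_real_def)
  let ?w = "\<lambda>i. (1 / vnorm d v) * v i"
  have "vnorm d ?w = 1"
    using pos vnorm_mult_left[of "1 / vnorm d v" d v] by simp
  then have "vnorm m (mvmul d A ?w) \<le> opnorm m d A"
    by (rule vnorm_mvmul_le_opnorm_of_unit)
  moreover have "vnorm m (mvmul d A ?w) = (1 / vnorm d v) * vnorm m (mvmul d A v)"
    unfolding mvmul_mult_right using pos by (intro vnorm_mult_left) simp
  ultimately show ?thesis
    using pos by (simp add: divide_le_eq mult.commute)
qed

lemma linear_differential_inequality:
  fixes q q' :: "real \<Rightarrow> real"
  assumes "t0 \<le> t" and "continuous_on {t0..t} q"
    and "\<And>s. t0 < s \<Longrightarrow> s < t \<Longrightarrow> (q has_real_derivative q' s) (at s)"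
    and "\<And>s. t0 < s \<Longrightarrow> s < t \<Longrightarrow> q' s \<le> a * (q s + c)"
  shows "q t + c \<le> (q t0 + c) * exp (a * (t - t0))"
proof -
  define f where "f s = (q s + c) * exp (- a * (s - t0))" for s
  have "f t \<le> f t0"
  proof (rule DERIV_nonpos_imp_decreasing_open[OF assms(1)])
    show "continuous_on {t0..t} f"
      unfolding f_def using assms(2) by (intro continuous_intros)
    fix s assume s: "t0 < s" "s < t"
    have "((\<lambda>s. exp (- a * (s - t0))) has_real_derivative exp (- a * (s - t0)) * (- a)) (at s)"
      by (intro derivative_eq_intros) auto
    from DERIV_mult[OF DERIV_add[OF assms(3)[OF s] DERIV_const[of c]] this]
    have "(f has_real_derivative (q' s - a * (q s + c)) * exp (- a * (s - t0))) (at s)"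
      unfolding f_def[abs_def] by (rule DERIV_cong) (simp add: algebra_simps)
    moreover have "(q' s - a * (q s + c)) * exp (- a * (s - t0)) \<le> 0"
      using assms(4)[OF s] by (simp add: mult_nonpos_nonneg)
    ultimately show "\<exists>y. (f has_real_derivative y) (at s) \<and> y \<le> 0"
      by blast
  qed
  then have "(q t + c) * exp (- a * (t - t0)) * exp (a * (t - t0)) \<le> (q t0 + c) * exp (a * (t - t0))"
    by (simp add: f_def mult_right_mono)
  then show ?thesis
    by (simp add: mult.assoc flip: exp_add)
qed

lemma has_real_derivative_sqrt_sum_squares:
  assumes "0 < \<delta>" and "\<And>j. j < d \<Longrightarrow> ((\<lambda>s. y s j) has_real_derivative y' j) (at s)"
  shows "((\<lambda>s. sqrt ((\<Sum>j<d. (y s j)^2) + \<delta>^2)) has_real_derivative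
           (\<Sum>j<d. y s j * y' j) / sqrt ((\<Sum>j<d. (y s j)^2) + \<delta>^2)) (at s)"
proof -
  have pos: "0 < (\<Sum>j<d. (y s j)^2) + \<delta>^2"
    using assms(1) by (simp add: add_nonneg_pos sum_nonneg)
  have "((\<lambda>s. (\<Sum>j<d. (y s j)^2) + \<delta>^2) has_real_derivative
          (\<Sum>j<d. of_nat 2 * (y' j * y s j ^ (2 - Suc 0))) + 0) (at s)"
    using assms(2) by (intro DERIV_add DERIV_sum DERIV_power DERIV_const) simp
  moreover have "(\<Sum>j<d. of_nat 2 * (y' j * y s j ^ (2 - Suc 0))) = 2 * (\<Sum>j<d. y s j * y' j)"
    by (simp add: sum_distrib_left mult.commute)
  ultimately have "((\<lambda>s. (\<Sum>j<d. (y s j)^2) + \<delta>^2) has_real_derivative 2 * (\<Sum>j<d. y s j * y' j)) (at s)"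
    by simp
  from DERIV_chain2[OF DERIV_real_sqrt[OF pos] this] show ?thesis
    by (rule DERIV_cong) (simp add: inverse_eq_divide)
qed

lemma vnorm_increment_le_growth_bound:
  fixes x g :: "real \<Rightarrow> nat \<Rightarrow> real"
  assumes "t0 \<le> t" and "0 < a"
    and cont: "\<And>j. j < d \<Longrightarrow> continuous_on {t0..t} (\<lambda>s. x s j)"
    and deriv: "\<And>s j. t0 < s \<Longrightarrow> s < t \<Longrightarrow> j < d \<Longrightarrow>
                  ((\<lambda>s. x s j) has_real_derivative g s j) (at s)"
    and growth: "\<And>s. t0 < s \<Longrightarrow> s < t \<Longrightarrow> vnorm d (g s) \<le> a * vnorm d (x s) + B"
  shows "vnorm d (\<lambda>j. x t j - x t0 j) \<le> (vnorm d (x t0) + B / a) * (exp (a * (t - t0)) - 1)"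
proof -
  define c where "c = vnorm d (x t0) + B / a"
  define y where "y s = (\<lambda>j. x s j - x t0 j)" for s
  define E where "E = exp (a * (t - t0))"
  \<comment> \<open>The norm is not differentiable at \<open>0\<close>; smooth it by \<open>\<delta>\<close> and let \<open>\<delta> \<rightarrow> 0\<close> afterwards.\<close>
  have regularized: "vnorm d (y t) \<le> c * (E - 1) + \<delta> * E" if "0 < \<delta>" for \<delta>
  proof -
    define q where "q s = sqrt ((\<Sum>j<d. (y s j)^2) + \<delta>^2)" for s
    have norm_le_q: "vnorm d (y s) \<le> q s" for s
      unfolding vnorm_def q_def by simp
    have q_pos: "0 < q s" for s
      using \<open>0 < \<delta>\<close> by (simp add: q_def add_nonneg_pos sum_nonneg)
    have "q t + c \<le> (q t0 + c) * E"
      unfolding E_def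
    proof (rule linear_differential_inequality[OF \<open>t0 \<le> t\<close>])
      show "continuous_on {t0..t} q"
        unfolding q_def y_def using cont by (intro continuous_intros) auto
      fix s assume s: "t0 < s" "s < t"
      show "(q has_real_derivative (\<Sum>j<d. y s j * g s j) / q s) (at s)"
        unfolding q_def[abs_def] using s
        by (intro has_real_derivative_sqrt_sum_squares[OF \<open>0 < \<delta>\<close>])
           (auto simp: y_def intro!: derivative_eq_intros deriv)
      have "vnorm d (x s) \<le> vnorm d (y s) + vnorm d (x t0)"
        using vnorm_triangle[of d "y s" "x t0"] by (simp add: y_def)
      then have "a * vnorm d (x s) \<le> a * (vnorm d (y s) + vnorm d (x t0))"
        using \<open>0 < a\<close> by (intro mult_left_mono) simp_all
      then have "vnorm d (g s) \<le> a * (vnorm d (y s) + vnorm d (x t0)) + B"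
        using growth[OF s] by linarith
      also have "\<dots> = a * (vnorm d (y s) + c)"
        using \<open>0 < a\<close> by (simp add: c_def distrib_left)
      also have "\<dots> \<le> a * (q s + c)"
        using norm_le_q[of s] \<open>0 < a\<close> by simp
      finally have g_le: "vnorm d (g s) \<le> a * (q s + c)" .
      have "(\<Sum>j<d. y s j * g s j) \<le> vnorm d (y s) * vnorm d (g s)"
        using abs_sum_mult_le_vnorm abs_le_D1 by blast
      also have "\<dots> \<le> q s * (a * (q s + c))"
        using q_pos[of s] by (intro mult_mono norm_le_q g_le) (simp_all add: vnorm_nonneg)
      finally show "(\<Sum>j<d. y s j * g s j) / q s \<le> a * (q s + c)"
        using q_pos[of s] by (simp add: pos_divide_le_eq mult.commute)
    qed
    moreover have "q t0 = \<delta>"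
      using \<open>0 < \<delta>\<close> by (simp add: q_def y_def)
    ultimately have "q t + c \<le> (\<delta> + c) * E"
      by simp
    then show ?thesis
      using norm_le_q[of t] by (simp add: algebra_simps)
  qed
  have "vnorm d (y t) \<le> c * (E - 1)"
  proof (rule field_le_epsilon)
    fix e :: real assume "0 < e"
    then show "vnorm d (y t) \<le> c * (E - 1) + e"
      using regularized[of "e / E"] by (simp add: E_def)
  qed
  then show ?thesis
    by (simp add: y_def c_def E_def)
qed

lemma vnorm_increment_le_affine_ode:
  fixes x :: "real \<Rightarrow> nat \<Rightarrow> real"
  assumes "t0 \<le> t" and "0 < d" and "0 < opnorm d d A"
    and "\<And>j. j < d \<Longrightarrow> continuous_on {t0..t} (\<lambda>s. x s j)"
    and "\<And>s j. t0 < s \<Longrightarrow> s < t \<Longrightarrow> j < d \<Longrightarrow>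
           ((\<lambda>s. x s j) has_real_derivative mvmul d A (x s) j + b j) (at s)"
  shows "vnorm d (\<lambda>j. x t j - x t0 j)
           \<le> (vnorm d (x t0) + vnorm d b / opnorm d d A) * (exp (opnorm d d A * (t - t0)) - 1)"
proof (rule vnorm_increment_le_growth_bound[where g = "\<lambda>s j. mvmul d A (x s) j + b j"])
  fix s
  show "vnorm d (\<lambda>j. mvmul d A (x s) j + b j) \<le> opnorm d d A * vnorm d (x s) + vnorm d b"
    using vnorm_triangle[of d "mvmul d A (x s)" b] vnorm_mvmul_le_opnorm[OF assms(2), of d A "x s"]
    by linarith
qed (use assms in auto)

lemma mult_exp_minus_one_le_of_le_ln:
  fixes a S \<beta> \<tau> :: real
  assumes "0 \<le> a" "0 \<le> S" "0 \<le> \<beta>" "\<tau> \<le> 1 / a * ln (\<beta> / S + 1)"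
  shows "S * (exp (a * \<tau>) - 1) \<le> \<beta>"
proof (cases "a = 0 \<or> S = 0")
  case True
  then show ?thesis
    using assms(3) by auto
next
  case False
  with assms(1,2) have "0 < a" "0 < S"
    by auto
  have "a * \<tau> \<le> ln (\<beta> / S + 1)"
    using \<open>0 < a\<close> assms(4) by (simp add: le_divide_eq mult.commute)
  moreover have "0 < \<beta> / S + 1"
    using \<open>0 < S\<close> assms(3) by (simp add: add_nonneg_pos)
  ultimately have "exp (a * \<tau>) - 1 \<le> \<beta> / S"
    by (metis diff_le_eq exp_le_cancel_iff exp_ln add.commute)
  then show ?thesis
    using \<open>0 < S\<close> by (simp add: le_divide_eq mult.commute)
qed

lemma not_in_range_between_consecutive:
  assumes "strict_mono tt" "tt k < s" "s < tt (Suc k)"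
  shows "s \<notin> range tt"
proof
  assume "s \<in> range tt"
  then obtain m where "s = tt m"
    by blast
  with assms have "k < m" "m < Suc k"
    using strict_mono_less by metis+
  then show False
    by simp
qed

lemma floor_divide_eq_between_consecutive:
  fixes tt :: "nat \<Rightarrow> real"
  assumes "0 < T" "strict_mono tt" and grid: "\<And>j::nat. real j * T \<in> range tt"
    and "0 \<le> tt k" "tt k \<le> s" "s < tt (Suc k)"
  shows "\<lfloor>s / T\<rfloor> = \<lfloor>tt k / T\<rfloor>"
proof -
  define j where "j = nat \<lfloor>tt k / T\<rfloor>"
  have j_eq: "real j = of_int \<lfloor>tt k / T\<rfloor>"
    using assms(1,4) by (simp add: j_def)
  \<comment> \<open>The grid point following \<open>tt k\<close> is itself a sample, so it is not before \<open>tt (Suc k)\<close>.\<close>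
  obtain m where m: "tt m = (real j + 1) * T"
    using grid[of "Suc j"] by (auto simp: algebra_simps)
  have "tt k / T < real j + 1"
    using real_of_int_floor_add_one_gt[of "tt k / T"] j_eq by linarith
  then have "tt k < tt m"
    using m assms(1) by (simp add: divide_less_eq)
  then have "tt (Suc k) \<le> tt m"
    using strict_mono_less[OF assms(2)] strict_mono_less_eq[OF assms(2)] by (metis Suc_leI)
  then have "s / T < real j + 1"
    using m assms by (simp add: divide_less_eq)
  moreover have "real j \<le> s / T"
    using j_eq of_int_floor_le[of "tt k / T"] divide_right_mono[OF assms(5), of T] assms(1)
    by linarith
  ultimately show ?thesis
    using j_eq by (simp add: floor_eq_iff)
qed

lemma platoon_input_eq_if_floor_eq:
  "\<lfloor>s / T\<rfloor> = \<lfloor>t / T\<rfloor> \<Longrightarrow>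
     platoon_input tau T gamma eta tb vb ab fail x s = platoon_input tau T gamma eta tb vb ab fail x t"
  unfolding platoon_input_def by simp

lemma vnorm_increment_le_between_samples:
  fixes x u :: "real \<Rightarrow> nat \<Rightarrow> real" and tt :: "nat \<Rightarrow> real"
  assumes samples: "0 < T" "strict_mono tt" "\<And>j::nat. real j * T \<in> range tt" "0 \<le> tt k"
    and hold: "\<And>s t. \<lfloor>s / T\<rfloor> = \<lfloor>t / T\<rfloor> \<Longrightarrow> u s = u t"
    and "0 < d" "0 < opnorm d d A"
    and cont: "\<And>j. j < d \<Longrightarrow> continuous_on {0..} (\<lambda>t. x t j)"
    and deriv: "\<And>j t. j < d \<Longrightarrow> 0 < t \<Longrightarrow> (\<forall>m::nat. t \<noteq> real m * T) \<Longrightarrow>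
                  ((\<lambda>s. x s j) has_real_derivative mvmul d A (x t) j + mvmul p Bm (u t) j) (at t)"
    and t: "tt k \<le> t" "t < tt (Suc k)"
  shows "vnorm d (\<lambda>j. x t j - x (tt k) j)
           \<le> (vnorm d (x (tt k)) + vnorm d (mvmul p Bm (u (tt k))) / opnorm d d A)
              * (exp (opnorm d d A * (t - tt k)) - 1)"
proof (rule vnorm_increment_le_affine_ode)
  show "tt k \<le> t" "0 < d" "0 < opnorm d d A"
    by fact+
  show "continuous_on {tt k..t} (\<lambda>s. x s j)" if "j < d" for j
    using cont[OF that] by (rule continuous_on_subset) (use samples(4) in auto)
  fix s j assume s: "tt k < s" "s < t" and "j < d"
  have "s \<notin> range tt"
    using s t by (intro not_in_range_between_consecutive[OF samples(2)]) auto
  then have "\<forall>m::nat. s \<noteq> real m * T"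
    using samples(3) by blast
  moreover have "u s = u (tt k)"
    using s t by (intro hold floor_divide_eq_between_consecutive[OF samples]) auto
  moreover have "0 < s"
    using s samples(4) by linarith
  ultimately show "((\<lambda>s. x s j) has_real_derivative mvmul d A (x s) j + mvmul p Bm (u (tt k)) j) (at s)"
    using deriv[OF \<open>j < d\<close>, of s] by simp
qed

theorem theorem1:
  fixes n :: nat
    and tau_d h kp kd r T t_brake gamma eta alpha :: real
    and L :: "nat \<Rightarrow> real"
    and fail :: "nat \<Rightarrow> nat \<Rightarrow> bool"
    and pb vb ab :: "real \<Rightarrow> real"
    and x :: "real \<Rightarrow> nat \<Rightarrow> real"
    and u :: "real \<Rightarrow> nat \<Rightarrow> real"
    and tt :: "nat \<Rightarrow> real"
  assumes n_ge: "n \<ge> 2"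
    and tau_pos: "tau_d > 0" and h_pos: "h > 0"
    and L_pos: "\<forall>i. 1 \<le> i \<and> i \<le> n \<longrightarrow> L i > 0"
    and r_pos: "r > 0" and T_pos: "T > 0"
    and tb_pos: "t_brake > 0" and gamma_pos: "gamma > 0"
    and eta_pos: "eta > 0" and eta_le: "eta \<le> 1 / (4 * tau_d)"
    and brake: "brake_traj tau_d gamma eta t_brake pb vb ab"
    and u_def: "u = platoon_input tau_d T gamma eta t_brake vb ab fail x"
    and dyn: "\<forall>j < 3 + 6*n. continuous_on {0..} (\<lambda>t. x t j) \<and>
               (\<forall>t > 0. (\<forall>m::nat. t \<noteq> real m * T) \<longrightarrow>
                 ((\<lambda>s. x s j) has_real_derivative
                    (mvmul (3 + 6*n) (Ac n tau_d h kp kd) (x t) j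
                     + mvmul (1 + n) (Bc n tau_d h) (u t) j)) (at t))"
    and e_def: "\<forall>t \<ge> 0. \<forall>i \<in> {1..n}. x t (eidx i) =
                 (x t (pidx (i - 1)) - x t (pidx i) - L i) - (r + h * x t (vidx i))"
    and ed_def: "\<forall>t \<ge> 0. \<forall>i \<in> {1..n}. x t (edidx i) =
                 x t (vidx (i - 1)) - x t (vidx i) - h * x t (aidx i)"
    and tt0: "0 \<le> tt 0" and tt_mono: "strict_mono tt"
    and S_sub_T: "\<forall>j::nat. \<exists>k. tt k = real j * T"
    and alpha_pos: "alpha > 0"
    and step: "\<forall>k. tt (Suc k) - tt k \<le>
                 1 / opnorm (3 + 6*n) (3 + 6*n) (Ac n tau_d h kp kd) *
                 ln (alpha / (sqrt 2 * (vnorm (3 + 6*n) (x (tt k))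
                     + vnorm (3 + 6*n) (mvmul (1 + n) (Bc n tau_d h) (u (tt k)))
                       / opnorm (3 + 6*n) (3 + 6*n) (Ac n tau_d h kp kd))) + 1)"
  shows "\<forall>k. \<forall>i \<in> {2..n}. \<forall>t. tt k \<le> t \<and> t < tt (Suc k) \<longrightarrow>
           \<bar>(x t (pidx (i - 1)) - x t (pidx i) - L i)
            - (x (tt k) (pidx (i - 1)) - x (tt k) (pidx i) - L i)\<bar> \<le> alpha"
proof (intro allI ballI impI)
  fix k i t
  assume i: "i \<in> {2..n}" and t: "tt k \<le> t \<and> t < tt (Suc k)"
  define d where "d = 3 + 6 * n"
  define a where "a = opnorm d d (Ac n tau_d h kp kd)"
  define S where "S = vnorm d (x (tt k)) + vnorm d (mvmul (1 + n) (Bc n tau_d h) (u (tt k))) / a"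
  have step_k: "tt (Suc k) - tt k \<le> 1 / a * ln (alpha / sqrt 2 / S + 1)"
    using step by (simp add: a_def S_def d_def)
  \<comment> \<open>As \<open>1 / 0 = 0\<close>, the step condition would force \<open>tt (Suc k) \<le> tt k\<close> if \<open>a = 0\<close>.\<close>
  have "a \<noteq> 0"
    using step_k strict_mono_less[OF tt_mono, of k "Suc k"] by auto
  moreover have "0 \<le> a"
    unfolding a_def d_def by (rule opnorm_nonneg) simp
  ultimately have "0 < a"
    by simp
  have "vnorm d (\<lambda>j. x t j - x (tt k) j) \<le> S * (exp (a * (t - tt k)) - 1)"
    unfolding S_def a_def
  proof (rule vnorm_increment_le_between_samples[OF T_pos tt_mono])
    show "real j * T \<in> range tt" for j :: nat
      using S_sub_T by (metis rangeI)
    show "0 \<le> tt k"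
      using tt0 strict_mono_less_eq[OF tt_mono, of 0 k] by simp
    show "\<lfloor>s / T\<rfloor> = \<lfloor>t / T\<rfloor> \<Longrightarrow> u s = u t" for s t
      unfolding u_def by (rule platoon_input_eq_if_floor_eq)
  qed (use dyn t \<open>0 < a\<close> in \<open>simp_all add: a_def d_def\<close>)
  also have "\<dots> \<le> alpha / sqrt 2"
    using \<open>0 < a\<close> alpha_pos step_k t
    by (intro mult_exp_minus_one_le_of_le_ln) (auto simp: S_def vnorm_nonneg)
  finally have "sqrt 2 * vnorm d (\<lambda>j. x t j - x (tt k) j) \<le> alpha"
    by (simp add: field_simps)
  moreover have "\<bar>(x t (pidx (i - 1)) - x (tt k) (pidx (i - 1))) - (x t (pidx i) - x (tt k) (pidx i))\<bar>
                   \<le> sqrt 2 * vnorm d (\<lambda>j. x t j - x (tt k) j)"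
    using i by (intro abs_diff_le_sqrt2_vnorm) (auto simp: pidx_def d_def)
  ultimately show "\<bar>(x t (pidx (i - 1)) - x t (pidx i) - L i)
                    - (x (tt k) (pidx (i - 1)) - x (tt k) (pidx i) - L i)\<bar> \<le> alpha"
    by linarith
qed

end
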